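(* Let $\Sigma$ be a positive definite $5\times 5$ real matrix of the form $\Sigma=\Delta+\Gamma\Gamma^t$ with $\Delta$ positive definite diagonal and $\Gamma\in\mathbb{R}^{5\times 2}$ of rank $2$. Assume that $\Sigma$ admits no representation $\Sigma=\Delta'+\Gamma'\Gamma'^t$ with $\Delta'$ positive definite diagonal and $\Gamma'\in\mathbb{R}^{5\times 2}$ of rank at most $1$, and that every row of $\Sigma$ contains at least one nonzero off-diagonal entry. Let $k$ be the largest integer $n$ for which there is $A\subseteq\{1,\dots,5\}$ with $|A|=n$ and $\mathrm{rk}(\Gamma_A)=1$, where $\Gamma_A$ denotes the rows of $\Gamma$ indexed by $A$. Then $k\le 3$, and: (i) If $k\in\{1,2\}$, then for every representation $\Sigma=D+GG^t$ with $D$ positive definite diagonal and $G\in\mathbb{R}^{5\times 2}$, we have $GG^t=\Gamma\Gamma^t$. (ii) If $k=3$, then after permuting rows (and correspondingly rows and columns of $\Sigma$) so that $\mathrm{rk}(\Gamma_{\{1,2,3\}})=1$, there is an orthogonal $2\times 2$ matrix $Q$ such that $\Gamma Q=(\gamma_{ij})$ satisfies $\gamma_{12}=\gamma_{22}=\gamma_{32}=0$ and $\gamma_{11},\gamma_{21},\gamma_{31},\gamma_{42},\gamma_{52}$ are all nonzero. Moreover, for every other representation $\Sigma=D+GG^t$ with $D$ positive definite diagonal and $G\in\mathbb{R}^{5\times 2}$, there is an orthogonal $2\times 2$ matrix $Q'$ such that $GQ'=(g_{ij})$ has $g_{12}=g_{22}=g_{32}=0$, $g_{42}\neq0$, $g_{52}\neq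 0$, the first column of $GQ'$ equals the first column of $\Gamma Q$, and $g_{42}g_{52}=\gamma_{42}\gamma_{52}$. *)

theory Defs
  imports "HOL-Analysis.Analysis" "HOL-Library.Numeral_Type"
begin

definition pos_def :: "real^'n^'n \<Rightarrow> bool" where
  "pos_def S \<longleftrightarrow> transpose S = S \<and> (\<forall>x. x \<noteq> 0 \<longrightarrow> x \<bullet> (S *v x) > 0)"

definition pd_diag :: "real^'n^'n \<Rightarrow> bool" where
  "pd_diag D \<longleftrightarrow> (\<forall>i j. i \<noteq> j \<longrightarrow> D$i$j = 0) \<and> (\<forall>i. D$i$i > 0)"

definition subrank :: "real^'n^'m \<Rightarrow> 'm set \<Rightarrow> nat" where
  "subrank G A = dim {row i G | i. i \<in> A}"

definition kmax :: "real^'n^'m \<Rightarrow> nat" where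
  "kmax G = Max {card A | A. subrank G A = 1}"

end

theory Submission
  imports Defs
begin

(* Write g(i,j) = (G G^t)_ij for the Gram matrix of the rows of a loading matrix G with two
   columns.  Any two representations Sigma = D + G G^t with D diagonal have the same
   off-diagonal Gram entries, and loadings matter only up to a rotation G Q.  The question is
   therefore how much of G G^t the off-diagonal entries determine.  Two identities answer it:
   every 3x3 submatrix of a Gram matrix of vectors in R^2 is singular, and an off-diagonal 2x2
   minor g(j,l) g(k,m) - g(j,m) g(k,l) equals the product of row minors [j,k] [l,m].  Expanding
   the first identity along g(i,i) shows that g(i,i) is determined as soon as the four other
   indices split into two pairs of non-parallel rows (diagonal_determined).

   After Gram entries, row minors and rotations, and the rank-one bookkeeping for row sets, the
   three parts of the theorem are proved in turn:
   - k <= 3: a rank-one set with at most one row outside can be rotated onto the first axis, and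
     the remaining second factor is diagonal, giving a one-factor representation;
   - k <= 2: no three rows are parallel, so every index admits the splitting above and the whole
     Gram matrix is determined;
   - k = 3: rotating the rank-one triple A onto the first axis determines the norm of one row of A,
     hence the first column of any other representation (after rotation); the off-diagonal
     entries then force its second column to vanish on A and fix the product of the other two
     entries. *)

definition minor2 :: "real^2^'m \<Rightarrow> 'm \<Rightarrow> 'm \<Rightarrow> real" where
  "minor2 G i j = G$i$1 * G$j$2 - G$i$2 * G$j$1"

definition same_offdiag :: "real^'n^'m \<Rightarrow> real^'k^'m \<Rightarrow> bool" where
  "same_offdiag G H \<longleftrightarrow> (\<forall>i j. i \<noteq> j \<longrightarrow> (G ** transpose G)$i$j = (H ** transpose H)$i$j)"

(* For a unit vector (c, s), the rows of G ** rot c s are the coordinates of the rows of G in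
   the orthonormal frame (c, s), (-s, c). *)
definition rot :: "real \<Rightarrow> real \<Rightarrow> real^2^2" where
  "rot c s = (\<chi> i j. if j = 1 then (if i = 1 then c else s) else (if i = 1 then - s else c))"

lemma vec2_eq_0_iff: "(x::real^2) = 0 \<longleftrightarrow> x$1 = 0 \<and> x$2 = 0"
  by (simp add: vec_eq_iff forall_2)

lemma gram_entry:
  fixes G :: "real^2^'m"
  shows "(G ** transpose G)$i$j = G$i$1 * G$j$1 + G$i$2 * G$j$2"
  by (simp add: matrix_matrix_mult_def transpose_def sum_2)

lemma rot_columns:
  fixes G :: "real^2^'m"
  shows "(G ** rot c s)$i$1 = G$i$1 * c + G$i$2 * s"
    and "(G ** rot c s)$i$2 = G$i$2 * c - G$i$1 * s"
  by (simp_all add: rot_def matrix_matrix_mult_def sum_2)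

lemma rot_orthogonal:
  assumes "c\<^sup>2 + s\<^sup>2 = 1"
  shows "orthogonal_matrix (rot c s)"
  using assms unfolding orthogonal_matrix_def
  by (simp add: vec_eq_iff forall_2 matrix_matrix_mult_def sum_2 transpose_def mat_def rot_def
      power2_eq_square algebra_simps)

lemma gram_rotation_invariant:
  fixes G :: "real^'n^'m" and Q :: "real^'n^'n"
  assumes "orthogonal_matrix Q"
  shows "(G ** Q) ** transpose (G ** Q) = G ** transpose G"
proof -
  have "(G ** Q) ** transpose (G ** Q) = G ** (Q ** transpose Q) ** transpose G"
    by (simp add: matrix_transpose_mul matrix_mul_assoc)
  also have "\<dots> = G ** transpose G"
    using assms by (simp add: orthogonal_matrix_def)
  finally show ?thesis .
qed

lemma same_offdiag_sym: "same_offdiag G H \<Longrightarrow> same_offdiag H G"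
  by (simp add: same_offdiag_def)

lemma same_offdiag_rotate:
  assumes "same_offdiag G H" "orthogonal_matrix Q"
  shows "same_offdiag (G ** Q) H"
  using assms by (simp add: same_offdiag_def gram_rotation_invariant)

lemma same_offdiag_representations:
  fixes S D D' :: "real^'m^'m"
  assumes "pd_diag D" "pd_diag D'" "S = D + G ** transpose G" "S = D' + H ** transpose H"
  shows "same_offdiag G H"
  unfolding same_offdiag_def
proof (intro allI impI)
  fix i j :: 'm assume "i \<noteq> j"
  then have "D$i$j = 0" "D'$i$j = 0"
    using assms(1,2) by (simp_all add: pd_diag_def)
  moreover have "S$i$j = D$i$j + (G ** transpose G)$i$j" using assms(3) by simp
  moreover have "S$i$j = D'$i$j + (H ** transpose H)$i$j" using assms(4) by simp
  ultimately show "(G ** transpose G)$i$j = (H ** transpose H)$i$j" by simp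
qed

(* A 2x2 minor of a Gram matrix is a product of row minors (Cauchy-Binet). *)
lemma gram_minor_identity:
  fixes G :: "real^2^'m"
  defines "g \<equiv> \<lambda>a b. (G ** transpose G)$a$b"
  shows "g j l * g k m - g j m * g k l = minor2 G j k * minor2 G l m"
  by (simp add: g_def gram_entry minor2_def algebra_simps)

(* The 3x3 Gram submatrix with rows i, j, k and columns i, l, m is singular (rank <= 2);
   this is its Laplace expansion, isolating the diagonal entry g i i. *)
lemma gram_det3_expansion:
  fixes G :: "real^2^'m"
  defines "g \<equiv> \<lambda>a b. (G ** transpose G)$a$b"
  shows "g i i * (g j l * g k m - g j m * g k l)
       = g i l * (g j i * g k m - g j m * g k i) - g i m * (g j i * g k l - g j l * g k i)"
  by (simp add: g_def gram_entry algebra_simps)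

lemma diagonal_determined:
  fixes G H :: "real^2^'m"
  assumes off: "same_offdiag H G" and d: "distinct [i, j, k, l, m]"
    and nz: "minor2 G j k * minor2 G l m \<noteq> 0"
  shows "(H ** transpose H)$i$i = (G ** transpose G)$i$i"
proof -
  define g where "g = (\<lambda>a b. (G ** transpose G)$a$b)"
  define h where "h = (\<lambda>a b. (H ** transpose H)$a$b)"
  have hg: "h a b = g a b" if "a \<noteq> b" for a b
    using off that by (simp add: same_offdiag_def g_def h_def)
  have "h i i * (h j l * h k m - h j m * h k l)
      = h i l * (h j i * h k m - h j m * h k i) - h i m * (h j i * h k l - h j l * h k i)"
    unfolding h_def by (rule gram_det3_expansion)
  then have "h i i * (g j l * g k m - g j m * g k l)
      = g i l * (g j i * g k m - g j m * g k i) - g i m * (g j i * g k l - g j l * g k i)"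
    using d by (simp add: hg[of j i] hg[of k i] hg[of i l] hg[of i m] hg[of j l] hg[of j m]
        hg[of k l] hg[of k m] eq_commute[of j i] eq_commute[of k i])
  also have "\<dots> = g i i * (g j l * g k m - g j m * g k l)"
    unfolding g_def by (rule gram_det3_expansion[symmetric])
  finally have "h i i * (minor2 G j k * minor2 G l m) = g i i * (minor2 G j k * minor2 G l m)"
    by (simp add: g_def gram_minor_identity)
  then show ?thesis
    using nz by (simp add: g_def h_def)
qed

lemma subrank_one_minor:
  fixes G :: "real^2^'m"
  assumes "subrank G A = 1" "i \<in> A" "j \<in> A"
  shows "minor2 G i j = 0"
proof -
  let ?S = "{row i G | i. i \<in> A}"
  obtain B where B: "B \<subseteq> ?S" "independent B" "?S \<subseteq> span B" "card B = dim ?S"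
    by (rule basis_exists)
  then obtain b where "B = {b}"
    using assms(1) by (auto simp: subrank_def card_1_singleton_iff)
  then have "row i G \<in> span {b}" "row j G \<in> span {b}"
    using B(3) assms(2,3) by auto
  then obtain ci cj where "G$i = ci *\<^sub>R b" "G$j = cj *\<^sub>R b"
    by (auto simp: real_vector.span_singleton row_def)
  then show ?thesis by (simp add: minor2_def)
qed

lemma subrank_one_intro:
  fixes G :: "real^2^'m"
  assumes "a \<in> A" "G$a \<noteq> 0" "\<And>j. j \<in> A \<Longrightarrow> minor2 G a j = 0"
  shows "subrank G A = 1"
proof -
  let ?S = "{row i G | i. i \<in> A}"
  have "G$j \<in> span {G$a}" if "j \<in> A" for j
  proof -
    have w: "G$a$1 * G$j$2 = G$a$2 * G$j$1"
      using assms(3)[OF that] by (simp add: minor2_def)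
    consider "G$a$1 \<noteq> 0" | "G$a$2 \<noteq> 0" using assms(2) by (auto simp: vec2_eq_0_iff)
    then have "\<exists>c. G$j = c *\<^sub>R G$a"
    proof cases
      case 1
      then have "G$j = (G$j$1 / G$a$1) *\<^sub>R G$a"
        using w by (simp add: vec_eq_iff forall_2 field_simps)
      then show ?thesis by blast
    next
      case 2
      then have "G$j = (G$j$2 / G$a$2) *\<^sub>R G$a"
        using w by (simp add: vec_eq_iff forall_2 field_simps)
      then show ?thesis by blast
    qed
    then show ?thesis by (auto simp: real_vector.span_singleton)
  qed
  then have "?S \<subseteq> span {G$a}" by (auto simp: row_def)
  then have upper: "dim ?S \<le> 1"
    using dim_le_card[of ?S "{G$a}"] by simp
  have "row a G \<in> ?S" "row a G \<noteq> 0"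
    using assms(1,2) by (auto simp: row_def)
  then have "\<not> ?S \<subseteq> {0}"
    by blast
  then have "dim ?S \<noteq> 0"
    by simp
  with upper have "dim ?S = 1"
    by linarith
  then show ?thesis by (simp add: subrank_def)
qed

lemma subrank_one_nonzero_row:
  fixes G :: "real^2^'m"
  assumes "subrank G A = 1"
  obtains a where "a \<in> A" "G$a \<noteq> 0"
proof -
  have "dim {row i G | i. i \<in> A} \<noteq> 0"
    using assms by (simp add: subrank_def)
  then have "\<not> {row i G | i. i \<in> A} \<subseteq> {0}"
    by simp
  then show ?thesis using that by (auto simp: row_def)
qed

lemma finite_rank_one_sizes:
  fixes G :: "real^'n^'m"
  shows "finite {card A | A::'m set. subrank G A = 1}"
proof (rule finite_subset)
  show "{card A | A::'m set. subrank G A = 1} \<subseteq> {..CARD('m)}"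
    by (auto intro: card_mono)
qed simp

lemma kmax_ge:
  fixes G :: "real^'n^'m"
  assumes "subrank G A = 1"
  shows "card A \<le> kmax G"
  unfolding kmax_def using finite_rank_one_sizes assms by (auto intro: Max_ge)

lemma kmax_le:
  fixes G :: "real^'n^'m"
  assumes "subrank G A0 = 1" "\<And>A. subrank G A = 1 \<Longrightarrow> card A \<le> n"
  shows "kmax G \<le> n"
proof -
  have "{card A | A::'m set. subrank G A = 1} \<noteq> {}"
    using assms(1) by blast
  then have "kmax G \<in> {card A | A::'m set. subrank G A = 1}"
    unfolding kmax_def using finite_rank_one_sizes by (rule Max_in[rotated])
  then show ?thesis
    using assms(2) by auto
qed

lemma align_row:
  fixes G :: "real^2^'m"
  assumes "G$a \<noteq> 0"
  obtains Q where "orthogonal_matrix Q" "\<And>i. (G ** Q)$i$2 = 0 \<longleftrightarrow> minor2 G a i = 0"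
proof -
  define r where "r = sqrt ((G$a$1)\<^sup>2 + (G$a$2)\<^sup>2)"
  have pos: "(G$a$1)\<^sup>2 + (G$a$2)\<^sup>2 > 0"
    using assms by (auto simp: vec2_eq_0_iff add_pos_nonneg add_nonneg_pos)
  have r: "r > 0" "r\<^sup>2 = (G$a$1)\<^sup>2 + (G$a$2)\<^sup>2"
    using pos unfolding r_def by (simp_all add: real_sqrt_pow2)
  define Q where "Q = rot (G$a$1 / r) (G$a$2 / r)"
  have "(G$a$1 / r)\<^sup>2 + (G$a$2 / r)\<^sup>2 = ((G$a$1)\<^sup>2 + (G$a$2)\<^sup>2) / r\<^sup>2"
    by (simp add: power_divide add_divide_distrib)
  also have "\<dots> = 1"
    using r(1) by (simp add: r(2)[symmetric])
  finally have "orthogonal_matrix Q"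
    by (simp add: Q_def rot_orthogonal)
  moreover have "(G ** Q)$i$2 = minor2 G a i / r" for i
    using r by (simp add: Q_def rot_columns minor2_def field_simps)
  ultimately show ?thesis
    using that r by simp
qed

lemma align_first_column:
  fixes G H :: "real^2^'m"
  assumes off: "same_offdiag H G" and "G$a$2 = 0" "G$a$1 \<noteq> 0"
    and diag: "(H ** transpose H)$a$a = (G ** transpose G)$a$a"
  obtains Q where "orthogonal_matrix Q" "\<And>i. (H ** Q)$i$1 = G$i$1"
proof -
  define c where "c = H$a$1 / G$a$1"
  define s where "s = H$a$2 / G$a$1"
  have norm_a: "(H$a$1)\<^sup>2 + (H$a$2)\<^sup>2 = (G$a$1)\<^sup>2"
    using diag assms(2) by (simp add: gram_entry power2_eq_square)
  then have "c\<^sup>2 + s\<^sup>2 = 1"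
    using assms(3) by (simp add: c_def s_def power_divide add_divide_distrib[symmetric])
  moreover have "(H ** rot c s)$i$1 = G$i$1" for i
  proof (cases "i = a")
    case True
    then show ?thesis
      using norm_a assms(3) by (simp add: rot_columns c_def s_def field_simps power2_eq_square)
  next
    case False
    then have "H$a$1 * H$i$1 + H$a$2 * H$i$2 = G$a$1 * G$i$1"
      using off assms(2) by (simp add: same_offdiag_def gram_entry)
    then show ?thesis
      using assms(3) by (simp add: rot_columns c_def s_def field_simps)
  qed
  ultimately show ?thesis
    using that rot_orthogonal by blast
qed

lemma second_column_products:
  fixes G H :: "real^2^'m"
  assumes "same_offdiag H G" "\<And>i. H$i$1 = G$i$1" "i \<noteq> j"
  shows "H$i$2 * H$j$2 = G$i$2 * G$j$2"
  using assms by (simp add: same_offdiag_def gram_entry)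

(* A second factor with pairwise disjoint support is diagonal and can be absorbed into D. *)
lemma one_factor_representation:
  fixes G :: "real^2^'m" and D :: "real^'m^'m"
  assumes "pd_diag D" "\<And>i j. i \<noteq> j \<Longrightarrow> G$i$2 * G$j$2 = 0"
  shows "\<exists>D' (G'::real^2^'m). pd_diag D' \<and> rank G' \<le> 1 \<and>
           D + G ** transpose G = D' + G' ** transpose G'"
proof -
  define D' :: "real^'m^'m" where "D' = D + (\<chi> i j. G$i$2 * G$j$2)"
  define G' :: "real^2^'m" where "G' = (\<chi> i j. if j = 1 then G$i$1 else 0)"
  have "pd_diag D'"
    using assms unfolding pd_diag_def D'_def by (auto simp: add_pos_nonneg)
  moreover have "rows G' \<subseteq> span {axis 1 1}"
    by (auto simp: rows_def row_def G'_def vec_eq_iff forall_2 axis_def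
        real_vector.span_singleton intro!: exI[of _ "G$i$1" for i])
  then have "rank G' \<le> 1"
    using dim_le_card[of "rows G'" "{axis 1 1}"] by (simp add: row_rank_def)
  moreover have "D + G ** transpose G = D' + G' ** transpose G'"
    by (simp add: vec_eq_iff D'_def G'_def gram_entry)
  ultimately show ?thesis by blast
qed

lemma rank_one_cofinite_one_factor:
  fixes Gamma :: "real^2^'m" and D :: "real^'m^'m"
  assumes "pd_diag D" "subrank Gamma B = 1" "card (- B) \<le> 1"
  shows "\<exists>D' (G'::real^2^'m). pd_diag D' \<and> rank G' \<le> 1 \<and>
           D + Gamma ** transpose Gamma = D' + G' ** transpose G'"
proof -
  obtain a where a: "a \<in> B" "Gamma$a \<noteq> 0"
    using assms(2) by (rule subrank_one_nonzero_row)
  obtain Q where Q: "orthogonal_matrix Q" "\<And>i. (Gamma ** Q)$i$2 = 0 \<longleftrightarrow> minor2 Gamma a i = 0"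
    using align_row[OF a(2)] by blast
  have "(Gamma ** Q)$i$2 * (Gamma ** Q)$j$2 = 0" if "i \<noteq> j" for i j
  proof -
    have "i \<in> B \<or> j \<in> B"
    proof (rule ccontr)
      assume "\<not> (i \<in> B \<or> j \<in> B)"
      then have "card {i, j} \<le> card (- B)"
        by (intro card_mono) auto
      then show False
        using that assms(3) by simp
    qed
    then show ?thesis
      using Q(2) subrank_one_minor[OF assms(2) a(1)] by auto
  qed
  then have "\<exists>D' (G'::real^2^'m). pd_diag D' \<and> rank G' \<le> 1 \<and>
           D + (Gamma ** Q) ** transpose (Gamma ** Q) = D' + G' ** transpose G'"
    by (rule one_factor_representation[OF assms(1)])
  then show ?thesis
    by (simp only: gram_rotation_invariant[OF Q(1)])
qed

lemma card_complement:
  fixes A :: "'m::finite set"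
  shows "card (- A) = CARD('m) - card A"
  by (simp add: Compl_eq_Diff_UNIV card_Diff_subset)

lemma rank_one_sets_small:
  fixes Gamma :: "real^2^'m" and D :: "real^'m^'m"
  assumes "pd_diag D"
    and "\<not> (\<exists>D' (G'::real^2^'m). pd_diag D' \<and> rank G' \<le> 1 \<and>
              D + Gamma ** transpose Gamma = D' + G' ** transpose G')"
    and "subrank Gamma A = 1"
  shows "card A + 2 \<le> CARD('m)"
proof (rule ccontr)
  assume "\<not> card A + 2 \<le> CARD('m)"
  then have "card (- A) \<le> 1"
    by (simp add: card_complement)
  then show False
    using rank_one_cofinite_one_factor[OF assms(1,3)] assms(2) by blast
qed

lemma four_others:
  fixes i :: 'm
  assumes "5 \<le> CARD('m)"
  obtains x1 x2 x3 x4 where "distinct [i, x1, x2, x3, x4]"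
proof -
  have "4 \<le> card (UNIV - {i})"
    using assms by (simp add: card_Diff_subset)
  then obtain S where S: "S \<subseteq> UNIV - {i}" "card S = 4"
    by (meson obtain_subset_with_card_n)
  then obtain xs where xs: "set xs = S" "distinct xs"
    using finite_distinct_list by (metis card.infinite zero_neq_numeral)
  then have "length xs = 4"
    using S(2) distinct_card by fastforce
  then obtain x1 x2 x3 x4 where "xs = [x1, x2, x3, x4]"
    by (auto simp: length_Suc_conv numeral_eq_Suc)
  then have "distinct [i, x1, x2, x3, x4]"
    using xs S(1) by auto
  then show ?thesis by (rule that)
qed

(* If a symmetric relation Z is a partial matching (no two Z-edges share a vertex), then one of
   the three ways to split four points into two pairs avoids Z: every Z-edge rules out only the
   split containing it, and two Z-edges from different splits would share a vertex. *)
lemma pairing_avoiding_matching: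
  assumes "distinct [x1, x2, x3, x4]"
    and sym: "\<And>a b. Z a b \<Longrightarrow> Z b a"
    and matching: "\<And>a b c. distinct [a, b, c] \<Longrightarrow> \<not> (Z a b \<and> Z a c)"
  shows "(\<not> Z x1 x2 \<and> \<not> Z x3 x4) \<or> (\<not> Z x1 x3 \<and> \<not> Z x2 x4) \<or> (\<not> Z x1 x4 \<and> \<not> Z x2 x3)"
proof -
  note m = matching[of x1 x2 x3] matching[of x1 x2 x4] matching[of x1 x3 x4]
    matching[of x2 x1 x3] matching[of x2 x1 x4] matching[of x2 x3 x4]
    matching[of x3 x1 x2] matching[of x3 x1 x4] matching[of x3 x2 x4]
    matching[of x4 x1 x2] matching[of x4 x1 x3] matching[of x4 x2 x3]
  show ?thesis
    using m assms(1) sym[of x1 x2] sym[of x1 x3] sym[of x1 x4] sym[of x2 x3] sym[of x2 x4] sym[of x3 x4]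
    by simp blast
qed

lemma gram_determined_by_offdiag:
  fixes G H :: "real^2^'m"
  assumes "5 \<le> CARD('m)" and off: "same_offdiag H G"
    and no_triple: "\<And>a b c. distinct [a, b, c] \<Longrightarrow> minor2 G a b \<noteq> 0 \<or> minor2 G a c \<noteq> 0"
  shows "H ** transpose H = G ** transpose G"
proof -
  have diag: "(H ** transpose H)$i$i = (G ** transpose G)$i$i" for i
  proof -
    obtain x1 x2 x3 x4 where d: "distinct [i, x1, x2, x3, x4]"
      using four_others[OF assms(1)] by blast
    have "minor2 G b a = 0" if "minor2 G a b = 0" for a b
      using that by (simp add: minor2_def algebra_simps)
    then have "(minor2 G x1 x2 \<noteq> 0 \<and> minor2 G x3 x4 \<noteq> 0) \<or>
               (minor2 G x1 x3 \<noteq> 0 \<and> minor2 G x2 x4 \<noteq> 0) \<or>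
               (minor2 G x1 x4 \<noteq> 0 \<and> minor2 G x2 x3 \<noteq> 0)"
      using pairing_avoiding_matching[of x1 x2 x3 x4 "\<lambda>a b. minor2 G a b = 0"] d no_triple
      by auto
    then show ?thesis
      using diagonal_determined[OF off, of i x1 x2 x3 x4] diagonal_determined[OF off, of i x1 x3 x2 x4]
        diagonal_determined[OF off, of i x1 x4 x2 x3] d
      by auto
  qed
  show ?thesis
    unfolding vec_eq_iff
  proof (intro allI)
    fix i j
    show "(H ** transpose H)$i$j = (G ** transpose G)$i$j"
      using diag off by (cases "i = j") (auto simp: same_offdiag_def)
  qed
qed

lemma no_parallel_triple:
  fixes G :: "real^2^'m"
  assumes rows: "\<And>i. G$i \<noteq> 0" and "kmax G \<le> 2" and "distinct [a, b, c]"
  shows "minor2 G a b \<noteq> 0 \<or> minor2 G a c \<noteq> 0"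
proof (rule ccontr)
  assume "\<not> (minor2 G a b \<noteq> 0 \<or> minor2 G a c \<noteq> 0)"
  then have "subrank G {a, b, c} = 1"
    using rows by (intro subrank_one_intro[of a]) (auto simp: minor2_def)
  then have "card {a, b, c} \<le> kmax G"
    by (rule kmax_ge)
  then show False
    using assms(2,3) by auto
qed

lemma maximal_rank_one_set_normal_form:
  fixes G :: "real^2^'m"
  assumes rows: "\<And>i. G$i \<noteq> 0" and A: "subrank G A = 1"
    and maximal: "\<And>x. x \<notin> A \<Longrightarrow> subrank G (insert x A) \<noteq> 1"
  obtains Q where "orthogonal_matrix Q"
    "\<And>i. i \<in> A \<Longrightarrow> (G ** Q)$i$2 = 0 \<and> (G ** Q)$i$1 \<noteq> 0"
    "\<And>i. i \<notin> A \<Longrightarrow> (G ** Q)$i$2 \<noteq> 0"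
proof -
  obtain a where a: "a \<in> A" "G$a \<noteq> 0"
    using A by (rule subrank_one_nonzero_row)
  obtain Q where Q: "orthogonal_matrix Q" "\<And>i. (G ** Q)$i$2 = 0 \<longleftrightarrow> minor2 G a i = 0"
    using align_row[OF a(2)] by blast
  have norm: "((G ** Q)$i$1)\<^sup>2 + ((G ** Q)$i$2)\<^sup>2 = (G$i$1)\<^sup>2 + (G$i$2)\<^sup>2" for i
    using arg_cong[OF gram_rotation_invariant[OF Q(1)], of "\<lambda>M. M$i$i"]
    by (simp add: gram_entry power2_eq_square)
  have inA: "(G ** Q)$i$2 = 0 \<and> (G ** Q)$i$1 \<noteq> 0" if "i \<in> A" for i
  proof
    show "(G ** Q)$i$2 = 0"
      using Q(2) subrank_one_minor[OF A a(1) that] by simp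
    then show "(G ** Q)$i$1 \<noteq> 0"
      using norm[of i] rows[of i] by (auto simp: vec2_eq_0_iff)
  qed
  have outA: "(G ** Q)$i$2 \<noteq> 0" if "i \<notin> A" for i
  proof
    assume "(G ** Q)$i$2 = 0"
    then have "minor2 G a j = 0" if "j \<in> insert i A" for j
      using Q(2) subrank_one_minor[OF A a(1)] that by auto
    then have "subrank G (insert i A) = 1"
      using a by (intro subrank_one_intro[of a]) auto
    then show False
      using maximal[OF that] by simp
  qed
  show ?thesis
    using that Q(1) inA outA by blast
qed

(* The norm of a row a1 in A is determined
   (a2, m and a3, n are non-parallel pairs), so H can be rotated onto the first column of G;
   then the second column of H vanishes on A, not at m, n, and has the same product there. *)
lemma representation_normal_form:
  fixes G H :: "real^2^'m"
  assumes off: "same_offdiag H G" and d: "distinct [a1, a2, a3, m, n]"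
    and A: "{a1, a2, a3} \<subseteq> A" "- A = {m, n}"
    and inA: "\<And>i. i \<in> A \<Longrightarrow> G$i$2 = 0 \<and> G$i$1 \<noteq> 0"
    and outA: "\<And>i. i \<notin> A \<Longrightarrow> G$i$2 \<noteq> 0"
  obtains Q where "orthogonal_matrix Q" "\<And>i. i \<in> A \<Longrightarrow> (H ** Q)$i$2 = 0"
    "\<And>i. i \<notin> A \<Longrightarrow> (H ** Q)$i$2 \<noteq> 0" "\<And>i. (H ** Q)$i$1 = G$i$1"
    "(\<Prod>i\<in>-A. (H ** Q)$i$2) = (\<Prod>i\<in>-A. G$i$2)"
proof -
  have "minor2 G a2 m * minor2 G a3 n \<noteq> 0"
    using inA[of a2] inA[of a3] outA[of m] outA[of n] A by (auto simp: minor2_def)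
  moreover have "distinct [a1, a2, m, a3, n]"
    using d by auto
  ultimately have diag: "(H ** transpose H)$a1$a1 = (G ** transpose G)$a1$a1"
    using diagonal_determined[OF off] by blast
  have "G$a1$2 = 0" "G$a1$1 \<noteq> 0"
    using inA[of a1] A(1) by auto
  then obtain Q where Q: "orthogonal_matrix Q" "\<And>i. (H ** Q)$i$1 = G$i$1"
    using align_first_column[OF off _ _ diag] by blast
  have prod: "(H ** Q)$i$2 * (H ** Q)$j$2 = G$i$2 * G$j$2" if "i \<noteq> j" for i j
    by (rule second_column_products[OF same_offdiag_rotate[OF off Q(1)] Q(2) that])
  have out: "m \<notin> A" "n \<notin> A" "m \<noteq> n"
    using A(2) d by auto
  then have "(H ** Q)$m$2 * (H ** Q)$n$2 \<noteq> 0"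
    using prod[of m n] outA[of m] outA[of n] by simp
  then have mn: "(H ** Q)$m$2 \<noteq> 0" "(H ** Q)$n$2 \<noteq> 0"
    by auto
  have zero: "(H ** Q)$i$2 = 0" if "i \<in> A" for i
  proof -
    have "i \<noteq> m"
      using that out(1) by auto
    then have "(H ** Q)$i$2 * (H ** Q)$m$2 = 0"
      using prod[of i m] inA[OF that] by simp
    then show ?thesis
      using mn(1) by simp
  qed
  have nonzero: "(H ** Q)$i$2 \<noteq> 0" if "i \<notin> A" for i
    using that A(2) mn by auto
  have product: "(\<Prod>i\<in>-A. (H ** Q)$i$2) = (\<Prod>i\<in>-A. G$i$2)"
    using A(2) prod[of m n] out(3) by simp
  show ?thesis
    by (rule that[OF Q(1) zero nonzero Q(2) product])
qed

lemma rank_one_triple_identification: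
  fixes Gamma :: "real^2^'m" and S Delta :: "real^'m^'m"
  assumes "CARD('m) = 5" and rep: "pd_diag Delta" "S = Delta + Gamma ** transpose Gamma"
    and rows: "\<And>i. Gamma$i \<noteq> 0" and small: "\<And>B. subrank Gamma B = 1 \<Longrightarrow> card B \<le> 3"
    and A: "card A = 3" "subrank Gamma A = 1"
  shows "\<exists>Q::real^2^2. orthogonal_matrix Q \<and>
           (\<forall>i\<in>A. (Gamma ** Q)$i$2 = 0 \<and> (Gamma ** Q)$i$1 \<noteq> 0) \<and>
           (\<forall>i. i \<notin> A \<longrightarrow> (Gamma ** Q)$i$2 \<noteq> 0) \<and>
           (\<forall>(D::real^'m^'m) (G::real^2^'m). pd_diag D \<and> S = D + G ** transpose G \<longrightarrow>
              (\<exists>Q'::real^2^2. orthogonal_matrix Q' \<and>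
                 (\<forall>i\<in>A. (G ** Q')$i$2 = 0) \<and>
                 (\<forall>i. i \<notin> A \<longrightarrow> (G ** Q')$i$2 \<noteq> 0) \<and>
                 (\<forall>i. (G ** Q')$i$1 = (Gamma ** Q)$i$1) \<and>
                 (\<Prod>i\<in>-A. (G ** Q')$i$2) = (\<Prod>i\<in>-A. (Gamma ** Q)$i$2)))"
proof -
  have "subrank Gamma (insert x A) \<noteq> 1" if "x \<notin> A" for x
    using small[of "insert x A"] A(1) that by auto
  then obtain Q where Q: "orthogonal_matrix Q"
      "\<And>i. i \<in> A \<Longrightarrow> (Gamma ** Q)$i$2 = 0 \<and> (Gamma ** Q)$i$1 \<noteq> 0"
      "\<And>i. i \<notin> A \<Longrightarrow> (Gamma ** Q)$i$2 \<noteq> 0"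
    using maximal_rank_one_set_normal_form[OF rows A(2)] by blast
  obtain a1 a2 a3 where a: "A = {a1, a2, a3}" "a1 \<noteq> a2" "a2 \<noteq> a3" "a1 \<noteq> a3"
    using A(1) by (auto simp: card_3_iff)
  obtain m n where mn: "- A = {m, n}" "m \<noteq> n"
    using A(1) assms(1) card_complement[of A] by (auto simp: card_2_iff)
  have d: "distinct [a1, a2, a3, m, n]"
    using a mn by (auto simp: set_eq_iff)
  have "\<exists>Q'. orthogonal_matrix Q' \<and> (\<forall>i\<in>A. (G ** Q')$i$2 = 0) \<and>
          (\<forall>i. i \<notin> A \<longrightarrow> (G ** Q')$i$2 \<noteq> 0) \<and> (\<forall>i. (G ** Q')$i$1 = (Gamma ** Q)$i$1) \<and>
          (\<Prod>i\<in>-A. (G ** Q')$i$2) = (\<Prod>i\<in>-A. (Gamma ** Q)$i$2)"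
    if "pd_diag D" "S = D + G ** transpose G" for D :: "real^'m^'m" and G :: "real^2^'m"
  proof -
    have "same_offdiag G Gamma"
      by (rule same_offdiag_representations[OF that(1) rep(1) that(2) rep(2)])
    then have "same_offdiag G (Gamma ** Q)"
      using same_offdiag_sym same_offdiag_rotate Q(1) by blast
    then obtain Q' where "orthogonal_matrix Q'" "\<And>i. i \<in> A \<Longrightarrow> (G ** Q')$i$2 = 0"
        "\<And>i. i \<notin> A \<Longrightarrow> (G ** Q')$i$2 \<noteq> 0" "\<And>i. (G ** Q')$i$1 = (Gamma ** Q)$i$1"
        "(\<Prod>i\<in>-A. (G ** Q')$i$2) = (\<Prod>i\<in>-A. (Gamma ** Q)$i$2)"
      by (rule representation_normal_form[OF _ d _ mn(1)]) (use a(1) Q(2,3) in auto)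
    then show ?thesis by blast
  qed
  then show ?thesis
    using Q by blast
qed

lemma nonzero_rows:
  fixes Gamma :: "real^2^'m" and S Delta :: "real^'m^'m"
  assumes "pd_diag Delta" "S = Delta + Gamma ** transpose Gamma" "j \<noteq> i" "S$i$j \<noteq> 0"
  shows "Gamma$i \<noteq> 0"
proof
  assume zero: "Gamma$i = 0"
  have "S$i$j = Delta$i$j + (Gamma ** transpose Gamma)$i$j"
    using assms(2) by simp
  also have "\<dots> = 0"
    using assms(1,3) zero by (simp add: pd_diag_def gram_entry)
  finally show False
    using assms(4) by simp
qed

theorem lemma4:
  fixes Sigma Delta :: "real^5^5" and Gamma :: "real^2^5"
  assumes "pos_def Sigma"
    and "pd_diag Delta"
    and "Sigma = Delta + Gamma ** transpose Gamma"
    and "rank Gamma = 2"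
    and "\<not> (\<exists>(D'::real^5^5) (G'::real^2^5). pd_diag D' \<and> rank G' \<le> 1 \<and>
                Sigma = D' + G' ** transpose G')"
    and "\<forall>i. \<exists>j. j \<noteq> i \<and> Sigma$i$j \<noteq> 0"
  shows "kmax Gamma \<le> 3
    \<and> (kmax Gamma \<in> {1, 2} \<longrightarrow>
         (\<forall>(D::real^5^5) (G::real^2^5). pd_diag D \<and> Sigma = D + G ** transpose G \<longrightarrow>
             G ** transpose G = Gamma ** transpose Gamma))
    \<and> (kmax Gamma = 3 \<longrightarrow>
         (\<forall>A::5 set. card A = 3 \<and> subrank Gamma A = 1 \<longrightarrow>
            (\<exists>Q::real^2^2. orthogonal_matrix Q \<and>
               (\<forall>i\<in>A. (Gamma ** Q)$i$2 = 0 \<and> (Gamma ** Q)$i$1 \<noteq> 0) \<and>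
               (\<forall>i. i \<notin> A \<longrightarrow> (Gamma ** Q)$i$2 \<noteq> 0) \<and>
               (\<forall>(D::real^5^5) (G::real^2^5). pd_diag D \<and> Sigma = D + G ** transpose G \<longrightarrow>
                  (\<exists>Q'::real^2^2. orthogonal_matrix Q' \<and>
                     (\<forall>i\<in>A. (G ** Q')$i$2 = 0) \<and>
                     (\<forall>i. i \<notin> A \<longrightarrow> (G ** Q')$i$2 \<noteq> 0) \<and>
                     (\<forall>i. (G ** Q')$i$1 = (Gamma ** Q)$i$1) \<and>
                     (\<Prod>i\<in>-A. (G ** Q')$i$2) = (\<Prod>i\<in>-A. (Gamma ** Q)$i$2))))))"
proof -
  have rows: "Gamma$i \<noteq> 0" for i
    using assms(6) nonzero_rows[OF assms(2,3)] by blast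
  have "\<not> (\<exists>D' (G'::real^2^5). pd_diag D' \<and> rank G' \<le> 1 \<and>
              Delta + Gamma ** transpose Gamma = D' + G' ** transpose G')"
    using assms(3,5) by simp
  then have small: "card A \<le> 3" if "subrank Gamma A = 1" for A
    using rank_one_sets_small[OF assms(2) _ that] by simp
  have "subrank Gamma {0} = 1"
    using rows by (intro subrank_one_intro) (auto simp: minor2_def)
  then have k3: "kmax Gamma \<le> 3"
    using small by (rule kmax_le)
  have part_i: "G ** transpose G = Gamma ** transpose Gamma"
    if "kmax Gamma \<in> {1, 2}" "pd_diag D" "Sigma = D + G ** transpose G"
    for D :: "real^5^5" and G :: "real^2^5"
  proof (rule gram_determined_by_offdiag)
    show "same_offdiag G Gamma"
      by (rule same_offdiag_representations[OF that(2) assms(2) that(3) assms(3)])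
    show "minor2 Gamma a b \<noteq> 0 \<or> minor2 Gamma a c \<noteq> 0" if "distinct [a, b, c]" for a b c
      using no_parallel_triple[OF rows _ that] \<open>kmax Gamma \<in> {1, 2}\<close> by auto
  qed simp
  show ?thesis
    using k3 part_i rank_one_triple_identification[OF _ assms(2,3) rows small] by auto
qed

end
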